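(* Let $\Gamma\subset PGL_{2n+2}(\mathbb{C})$ be a group of type $\mathcal{L}$, and suppose the homogeneous coordinates $[z':z'']$ on $\mathbb{P}^{2n+1}$ are such that there is $R>0$ with $V_R=\{[z':z'']: \|z'\|>R\|z''\|\}\subset\Omega(\Gamma)$ and $g(V_R)\cap V_R=\emptyset$ for every $g\in\Gamma\setminus\{1\}$. Then there is a constant $R_0>0$ such that for every $g\in\Gamma\setminus\{1\}$, with representative $\begin{pmatrix}A_g&B_g\\C_g&D_g\end{pmatrix}\in SL_{2n+2}(\mathbb{C})$: (i) $\det C_g\neq0$; (ii) $\|A_gC_g^{-1}\|\leq R_0$; (iii) $\|C_g^{-1}D_g\|\leq R_0$.
   Context: $z'=(z^0,\dots,z^n)$, $z''=(z^{n+1},\dots,z^{2n+1})$; $\|\cdot\|$ is the Euclidean norm on vectors and the associated operator norm on matrices; $A_g,B_g,C_g,D_g\in M_{n+1}(\mathbb{C})$. Type $\mathcal{L}$: an $n$-plane is an $n$-dimensional projective linear subspace of $\mathbb{P}^{2n+1}$; with $N=\binom{2n+2}{n+1}-1$, $\mathcal{G}\subset\mathbb{P}^N=\mathbb{P}(\Lambda^{n+1}\mathbb{C}^{2n+2})$ the Plücker-embedded Grassmannian, $\hat\ell$ the Plücker point of $\ell$ and $\hat\sigma$ the induced action of $\sigma$ on $\mathbb{P}^N$; for pairwise distinct $(\tau_\nu)\subset PGL_{m+1}(\mathbb{C})$ with representatives normalized to have largest entry of absolute value $1$ that can be chosen to converge to $T$, the limit image is $\mathbb{P}(\operatorname{Im}T)$;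 a sequence in a discrete $\Gamma$ is normal if it consists of distinct elements and both it and $(\hat\sigma_\nu)$ have such convergent representatives; a limit $n$-plane is an $\ell$ with $\hat\ell$ in the limit image of some $(\hat\sigma_\nu)$ with $(\sigma_\nu)$ normal; $\Omega(\Gamma)$ is the complement of the union of limit $n$-planes; $\Gamma$ is of type $\mathcal{L}$ if it is discrete and $\Omega(\Gamma)$ contains a domain containing an $n$-plane. *)

theory Defs
  imports "HOL-Analysis.Analysis"
    "Jordan_Normal_Form.Determinant"
    "Jordan_Normal_Form.DL_Submatrix"
    "Jordan_Normal_Form.Gauss_Jordan_Elimination"
begin

definition euc_norm :: "complex vec \<Rightarrow> real" where
  "euc_norm v = sqrt (\<Sum>i<dim_vec v. (cmod (v $ i))\<^sup>2)"

definition op_norm :: "complex mat \<Rightarrow> real" where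
  "op_norm M = Sup {euc_norm (M *\<^sub>v v) | v. v \<in> carrier_vec (dim_col M) \<and> euc_norm v \<le> 1}"

definition mat_inv :: "complex mat \<Rightarrow> complex mat" where
  "mat_inv M = the (mat_inverse M)"

text \<open>An element of PGL_m(C) is represented by its class of representatives
 (all nonzero scalar multiples of one invertible m x m matrix).\<close>

definition pgl_cls :: "complex mat \<Rightarrow> complex mat set" where
  "pgl_cls A = {c \<cdot>\<^sub>m A | c. c \<noteq> 0}"

definition PGL :: "nat \<Rightarrow> complex mat set set" where
  "PGL m = {pgl_cls A | A. A \<in> carrier_mat m m \<and> det A \<noteq> 0}"

definition pgl_one :: "nat \<Rightarrow> complex mat set" where
  "pgl_one m = pgl_cls (1\<^sub>m m)"

definition is_subgroup_PGL :: "nat \<Rightarrow> complex mat set set \<Rightarrow> bool" where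
  "is_subgroup_PGL m \<Gamma> \<longleftrightarrow> \<Gamma> \<subseteq> PGL m \<and> pgl_one m \<in> \<Gamma>
     \<and> (\<forall>g\<in>\<Gamma>. \<forall>h\<in>\<Gamma>. \<forall>A\<in>g. \<forall>B\<in>h. pgl_cls (A * B) \<in> \<Gamma>)
     \<and> (\<forall>g\<in>\<Gamma>. \<forall>A\<in>g. \<forall>B. B \<in> carrier_mat m m \<and> A * B = 1\<^sub>m m \<longrightarrow> pgl_cls B \<in> \<Gamma>)"

definition mat_conv :: "nat \<Rightarrow> (nat \<Rightarrow> complex mat) \<Rightarrow> complex mat \<Rightarrow> bool" where
  "mat_conv m As A \<longleftrightarrow> (\<forall>i<m. \<forall>j<m. (\<lambda>k. As k $$ (i,j)) \<longlonglongrightarrow> A $$ (i,j))"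

text \<open>Discreteness in the (quotient) topology of PGL_m(C): no element of \<Gamma> is a limit
 of a sequence of other elements of \<Gamma> (convergence in PGL = convergence of suitable
 representatives).\<close>
definition discrete_PGL :: "nat \<Rightarrow> complex mat set set \<Rightarrow> bool" where
  "discrete_PGL m \<Gamma> \<longleftrightarrow> (\<forall>g\<in>\<Gamma>. \<not> (\<exists>gs As A. (\<forall>k. gs k \<in> \<Gamma> - {g} \<and> As k \<in> gs k)
        \<and> A \<in> g \<and> mat_conv m As A))"

text \<open>Generic square matrices indexed by a finite index set X (used both for
 C^{2n+2}, X = {0..2n+1}, and for the exterior power, X = (n+1)-subsets).\<close>

definition max_abs_one :: "'i set \<Rightarrow> ('i \<Rightarrow> 'i \<Rightarrow> complex) \<Rightarrow> bool" where
  "max_abs_one X T \<longleftrightarrow> Max {cmod (T i j) | i j. i \<in> X \<and> j \<in> X} = 1"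

definition norm_conv :: "'i set \<Rightarrow> (nat \<Rightarrow> ('i \<Rightarrow> 'i \<Rightarrow> complex) set) \<Rightarrow> ('i \<Rightarrow> 'i \<Rightarrow> complex) \<Rightarrow> bool" where
  "norm_conv X cls T \<longleftrightarrow> (\<exists>Ts. (\<forall>k. Ts k \<in> cls k \<and> max_abs_one X (Ts k))
      \<and> (\<forall>i\<in>X. \<forall>j\<in>X. (\<lambda>k. Ts k i j) \<longlonglongrightarrow> T i j))"

definition gimage :: "'i set \<Rightarrow> ('i \<Rightarrow> 'i \<Rightarrow> complex) \<Rightarrow> ('i \<Rightarrow> complex) set" where
  "gimage X T = {(\<lambda>i. if i \<in> X then (\<Sum>j\<in>X. T i j * v j) else 0) | v. True}"

definition subsets_k :: "nat \<Rightarrow> nat \<Rightarrow> nat set set" where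
  "subsets_k m k = {I. I \<subseteq> {..<m} \<and> card I = k}"

definition mfun :: "complex mat \<Rightarrow> nat \<Rightarrow> nat \<Rightarrow> complex" where
  "mfun A i j = A $$ (i,j)"

text \<open>k-th compound matrix (matrix of Lambda^k A w.r.t. the standard basis e_I, I increasing).\<close>
definition compound :: "nat \<Rightarrow> complex mat \<Rightarrow> nat set \<Rightarrow> nat set \<Rightarrow> complex" where
  "compound k A I J = det (submatrix A I J)"

text \<open>Class of the induced transformation \<sigma>^ on P(Lambda^{n+1} C^{2n+2}).\<close>
definition hat_cls :: "nat \<Rightarrow> complex mat set \<Rightarrow> (nat set \<Rightarrow> nat set \<Rightarrow> complex) set" where
  "hat_cls n g = {(\<lambda>I J. c * compound (n+1) A I J) | c A. c \<noteq> 0 \<and> A \<in> g}"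

text \<open>An n-plane of P^{2n+1} is given by a basis matrix M (size (2n+2) x (n+1), full column rank);
 its points are the (representatives of) [M c], c \<noteq> 0.\<close>
definition is_plane_basis :: "nat \<Rightarrow> complex mat \<Rightarrow> bool" where
  "is_plane_basis n M \<longleftrightarrow> M \<in> carrier_mat (2*n+2) (n+1)
      \<and> (\<forall>c\<in>carrier_vec (n+1). M *\<^sub>v c = 0\<^sub>v (2*n+2) \<longrightarrow> c = 0\<^sub>v (n+1))"

definition plane_points :: "nat \<Rightarrow> complex mat \<Rightarrow> complex vec set" where
  "plane_points n M = {M *\<^sub>v c | c. c \<in> carrier_vec (n+1) \<and> c \<noteq> 0\<^sub>v (n+1)}"

definition pluecker :: "nat \<Rightarrow> complex mat \<Rightarrow> nat set \<Rightarrow> complex" where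
  "pluecker n M I = (if I \<in> subsets_k (2*n+2) (n+1) then det (submatrix M I {..<n+1}) else 0)"

definition normal_seq :: "nat \<Rightarrow> complex mat set set \<Rightarrow> (nat \<Rightarrow> complex mat set) \<Rightarrow> bool" where
  "normal_seq n \<Gamma> \<sigma> \<longleftrightarrow> (\<forall>k. \<sigma> k \<in> \<Gamma>) \<and> inj \<sigma>
     \<and> (\<exists>T. norm_conv {..<2*n+2} (\<lambda>k. mfun ` \<sigma> k) T)
     \<and> (\<exists>T. norm_conv (subsets_k (2*n+2) (n+1)) (\<lambda>k. hat_cls n (\<sigma> k)) T)"

definition limit_plane :: "nat \<Rightarrow> complex mat set set \<Rightarrow> complex mat \<Rightarrow> bool" where
  "limit_plane n \<Gamma> M \<longleftrightarrow> is_plane_basis n M \<and>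
     (\<exists>\<sigma> T. normal_seq n \<Gamma> \<sigma> \<and> norm_conv (subsets_k (2*n+2) (n+1)) (\<lambda>k. hat_cls n (\<sigma> k)) T
        \<and> pluecker n M \<in> gimage (subsets_k (2*n+2) (n+1)) T)"

text \<open>Subsets of P^{2n+1} are represented by their cones of nonzero representatives.\<close>
definition Omega :: "nat \<Rightarrow> complex mat set set \<Rightarrow> complex vec set" where
  "Omega n \<Gamma> = (carrier_vec (2*n+2) - {0\<^sub>v (2*n+2)})
      - \<Union> {plane_points n M | M. limit_plane n \<Gamma> M}"

text \<open>Topology on C^m transported from the product topology on nat \<Rightarrow> complex
 (vectors extended by 0), which on this finite-dimensional subspace is the Euclidean one.\<close>
definition vecf :: "complex vec \<Rightarrow> nat \<Rightarrow> complex" where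
  "vecf v = (\<lambda>i. if i < dim_vec v then v $ i else 0)"

definition is_cone :: "nat \<Rightarrow> complex vec set \<Rightarrow> bool" where
  "is_cone m D \<longleftrightarrow> D \<subseteq> carrier_vec m - {0\<^sub>v m} \<and> (\<forall>z\<in>D. \<forall>c. c \<noteq> 0 \<longrightarrow> c \<cdot>\<^sub>v z \<in> D)"

text \<open>A domain of P^{m-1}: open connected subset, represented by its (saturated) cone in C^m - {0}.\<close>
definition proj_domain :: "nat \<Rightarrow> complex vec set \<Rightarrow> bool" where
  "proj_domain m D \<longleftrightarrow> is_cone m D \<and> D \<noteq> {}
     \<and> openin (top_of_set (vecf ` (carrier_vec m - {0\<^sub>v m}))) (vecf ` D)
     \<and> connected (vecf ` D)"

definition type_L :: "nat \<Rightarrow> complex mat set set \<Rightarrow> bool" where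
  "type_L n \<Gamma> \<longleftrightarrow> is_subgroup_PGL (2*n+2) \<Gamma> \<and> discrete_PGL (2*n+2) \<Gamma>
     \<and> (\<exists>D. proj_domain (2*n+2) D \<and> D \<subseteq> Omega n \<Gamma>
          \<and> (\<exists>M. is_plane_basis n M \<and> plane_points n M \<subseteq> D))"

text \<open>z' = first n+1 coordinates, z'' = last n+1 coordinates.\<close>
definition zfst :: "nat \<Rightarrow> complex vec \<Rightarrow> complex vec" where
  "zfst n z = vec (n+1) (\<lambda>i. z $ i)"

definition zsnd :: "nat \<Rightarrow> complex vec \<Rightarrow> complex vec" where
  "zsnd n z = vec (n+1) (\<lambda>i. z $ (i + (n+1)))"

definition V_R :: "nat \<Rightarrow> real \<Rightarrow> complex vec set" where
  "V_R n R = {z \<in> carrier_vec (2*n+2). euc_norm (zfst n z) > R * euc_norm (zsnd n z)}"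

definition pgl_image :: "complex mat set \<Rightarrow> complex vec set \<Rightarrow> complex vec set" where
  "pgl_image g S = {A *\<^sub>v z | A z. A \<in> g \<and> z \<in> S}"

end

theory Submission
  imports Defs
begin

text \<open>Only the escape hypothesis \<open>g(V\<^sub>R) \<inter> V\<^sub>R = {}\<close> and the invertibility of \<open>g\<close> are used, and
  \<open>R\<^sub>0 = R\<close> works.  For \<open>\<parallel>w\<parallel> > R\<parallel>u\<parallel>\<close> the point \<open>[w:u]\<close> lies in \<open>V\<^sub>R\<close>, so its image
  \<open>[Aw + Bu : Cw + Du]\<close> does not, i.e. \<open>\<parallel>Aw + Bu\<parallel> \<le> R\<parallel>Cw + Du\<parallel>\<close>.  In particular \<open>Cw + Du \<noteq> 0\<close>,
  since otherwise \<open>g[w:u] = 0\<close>.  Taking \<open>u = 0\<close> gives \<open>det C \<noteq> 0\<close> and, with \<open>w = C\<^sup>-\<^sup>1v\<close>, the bound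
  on \<open>AC\<^sup>-\<^sup>1\<close>; taking \<open>u = v\<close> and \<open>w = -C\<^sup>-\<^sup>1Dv\<close>, which makes \<open>Cw + Du = 0\<close>, forces
  \<open>\<parallel>C\<^sup>-\<^sup>1Dv\<parallel> \<le> R\<parallel>v\<parallel>\<close>.\<close>

lemma euc_norm_nonneg: "0 \<le> euc_norm v"
  unfolding euc_norm_def by (auto intro: sum_nonneg)

lemma euc_norm_zero_vec [simp]: "euc_norm (0\<^sub>v k) = 0"
  unfolding euc_norm_def by simp

lemma euc_norm_uminus [simp]: "euc_norm (- v) = euc_norm v"
  unfolding euc_norm_def by simp

lemma euc_norm_eq_0_iff:
  assumes "v \<in> carrier_vec k"
  shows "euc_norm v = 0 \<longleftrightarrow> v = 0\<^sub>v k"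
proof
  assume "euc_norm v = 0"
  then have "(\<Sum>i<dim_vec v. (cmod (v $ i))\<^sup>2) = 0"
    unfolding euc_norm_def by (simp add: sum_nonneg)
  then have "\<forall>i<dim_vec v. v $ i = 0"
    by (subst (asm) sum_nonneg_eq_0_iff) auto
  then show "v = 0\<^sub>v k" using assms by (intro eq_vecI) auto
qed simp

lemma mult_mat_zero_vec [simp]: "(A :: 'a :: semiring_0 mat) \<in> carrier_mat nr nc \<Longrightarrow> A *\<^sub>v 0\<^sub>v nc = 0\<^sub>v nr"
  by (intro eq_vecI) (auto simp: scalar_prod_def)

lemma mult_mat_vec_uminus:
  "(A :: 'a :: ring mat) \<in> carrier_mat nr nc \<Longrightarrow> v \<in> carrier_vec nc \<Longrightarrow> A *\<^sub>v (- v) = - (A *\<^sub>v v)"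
  by (intro eq_vecI) (auto simp: scalar_prod_def sum_negf)

lemma op_norm_le:
  assumes "\<And>v. v \<in> carrier_vec (dim_col X) \<Longrightarrow> euc_norm (X *\<^sub>v v) \<le> R * euc_norm v"
    and "0 \<le> R"
  shows "op_norm X \<le> R"
  unfolding op_norm_def
proof (rule cSup_least)
  show "{euc_norm (X *\<^sub>v v) |v. v \<in> carrier_vec (dim_col X) \<and> euc_norm v \<le> 1} \<noteq> {}"
    using zero_carrier_vec[of "dim_col X"] by fastforce
next
  fix x assume "x \<in> {euc_norm (X *\<^sub>v v) |v. v \<in> carrier_vec (dim_col X) \<and> euc_norm v \<le> 1}"
  then obtain v where v: "v \<in> carrier_vec (dim_col X)" "euc_norm v \<le> 1" "x = euc_norm (X *\<^sub>v v)"
    by auto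
  have "x \<le> R * euc_norm v" using assms(1) v by auto
  also have "\<dots> \<le> R" using v(2) assms(2) mult_left_mono[of "euc_norm v" 1 R] by simp
  finally show "x \<le> R" .
qed

lemma append_carrier_vec_halves:
  "w \<in> carrier_vec (n+1) \<Longrightarrow> u \<in> carrier_vec (n+1) \<Longrightarrow> w @\<^sub>v u \<in> carrier_vec (2*n+2)"
  using append_carrier_vec[of w "n+1" u "n+1"] by (simp add: mult_2)

lemma append_vec_in_V_R_iff:
  assumes "w \<in> carrier_vec (n+1)" and "u \<in> carrier_vec (n+1)"
  shows "w @\<^sub>v u \<in> V_R n R \<longleftrightarrow> R * euc_norm u < euc_norm w"
proof -
  have "zfst n (w @\<^sub>v u) = w" "zsnd n (w @\<^sub>v u) = u"
    using assms unfolding zfst_def zsnd_def by (auto intro!: eq_vecI)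
  then show ?thesis using assms append_carrier_vec_halves[OF assms] unfolding V_R_def by auto
qed

locale V_R_escaping_matrix =
  fixes n :: nat and R :: real and M A B C D :: "complex mat"
  assumes M_carrier: "M \<in> carrier_mat (2*n+2) (2*n+2)"
    and det_M: "det M \<noteq> 0"
    and R_nonneg: "0 \<le> R"
    and escapes: "\<And>z. z \<in> V_R n R \<Longrightarrow> M *\<^sub>v z \<notin> V_R n R"
    and blocks: "split_block M (n+1) (n+1) = (A, B, C, D)"
begin

abbreviation (input) m where "m \<equiv> n + 1"

lemma block_carriers:
  "A \<in> carrier_mat m m" "B \<in> carrier_mat m m" "C \<in> carrier_mat m m" "D \<in> carrier_mat m m"
  and M_eq_four_block: "M = four_block_mat A B C D"
  using split_block[OF blocks] M_carrier by auto

lemma mult_append_vec: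
  assumes "w \<in> carrier_vec m" "u \<in> carrier_vec m"
  shows "M *\<^sub>v (w @\<^sub>v u) = (A *\<^sub>v w + B *\<^sub>v u) @\<^sub>v (C *\<^sub>v w + D *\<^sub>v u)"
  unfolding M_eq_four_block using block_carriers assms by (rule four_block_mat_mult_vec)

lemma escape_inequality:
  assumes w: "w \<in> carrier_vec m" and u: "u \<in> carrier_vec m"
    and "R * euc_norm u < euc_norm w"
  shows "euc_norm (A *\<^sub>v w + B *\<^sub>v u) \<le> R * euc_norm (C *\<^sub>v w + D *\<^sub>v u)"
proof -
  have "w @\<^sub>v u \<in> V_R n R" using assms by (simp add: append_vec_in_V_R_iff)
  from escapes[OF this]
  have "(A *\<^sub>v w + B *\<^sub>v u) @\<^sub>v (C *\<^sub>v w + D *\<^sub>v u) \<notin> V_R n R"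
    unfolding mult_append_vec[OF w u] .
  then show ?thesis using block_carriers w u by (simp add: append_vec_in_V_R_iff not_less)
qed

lemma lower_block_nonzero:
  assumes w: "w \<in> carrier_vec m" and u: "u \<in> carrier_vec m"
    and wu: "R * euc_norm u < euc_norm w"
  shows "C *\<^sub>v w + D *\<^sub>v u \<noteq> 0\<^sub>v m"
proof
  assume lower: "C *\<^sub>v w + D *\<^sub>v u = 0\<^sub>v m"
  have upper_carrier: "A *\<^sub>v w + B *\<^sub>v u \<in> carrier_vec m" using block_carriers w u by auto
  have "euc_norm (A *\<^sub>v w + B *\<^sub>v u) \<le> 0" using escape_inequality[OF assms] lower by simp
  then have "A *\<^sub>v w + B *\<^sub>v u = 0\<^sub>v m"
    using euc_norm_eq_0_iff[OF upper_carrier] euc_norm_nonneg by (meson order_antisym)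
  then have "M *\<^sub>v (w @\<^sub>v u) = 0\<^sub>v m @\<^sub>v 0\<^sub>v m" using lower mult_append_vec[OF w u] by simp
  also have "\<dots> = 0\<^sub>v (2*n+2)" by (intro eq_vecI) auto
  finally have "w @\<^sub>v u = 0\<^sub>v (2*n+2)"
    using det_0_iff_vec_prod_zero[OF M_carrier] det_M append_carrier_vec_halves[OF w u] by blast
  also have "0\<^sub>v (2*n+2) = 0\<^sub>v m @\<^sub>v 0\<^sub>v m" by (intro eq_vecI) auto
  finally have "w = 0\<^sub>v m" using w by simp
  then show False using wu mult_nonneg_nonneg[OF R_nonneg euc_norm_nonneg[of u]] by simp
qed

lemma det_C_nonzero: "det C \<noteq> 0"
proof
  assume "det C = 0"
  then obtain w where w: "w \<in> carrier_vec m" "w \<noteq> 0\<^sub>v m" "C *\<^sub>v w = 0\<^sub>v m"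
    using det_0_iff_vec_prod_zero[OF block_carriers(3)] by blast
  have "R * euc_norm (0\<^sub>v m) < euc_norm w"
    using w euc_norm_eq_0_iff[OF w(1)] euc_norm_nonneg[of w] by simp
  then show False
    using lower_block_nonzero[OF w(1) zero_carrier_vec] w block_carriers by simp
qed

lemma mat_inv_C: "C * mat_inv C = 1\<^sub>m m" "mat_inv C * C = 1\<^sub>m m" "mat_inv C \<in> carrier_mat m m"
proof -
  have "C \<in> Units (ring_mat TYPE(complex) m ())"
    using det_non_zero_imp_unit[OF block_carriers(3) det_C_nonzero] .
  then obtain Ci where "mat_inverse C = Some Ci"
    using mat_inverse(1)[OF block_carriers(3), of "()"] by fastforce
  then show "C * mat_inv C = 1\<^sub>m m" "mat_inv C * C = 1\<^sub>m m" "mat_inv C \<in> carrier_mat m m"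
    using mat_inverse(2)[OF block_carriers(3)] unfolding mat_inv_def by auto
qed

lemma op_norm_A_mult_inv_C_le: "op_norm (A * mat_inv C) \<le> R"
proof (rule op_norm_le[OF _ R_nonneg])
  fix v :: "complex vec" assume "v \<in> carrier_vec (dim_col (A * mat_inv C))"
  then have v: "v \<in> carrier_vec m" using mat_inv_C by auto
  define w where "w = mat_inv C *\<^sub>v v"
  have w: "w \<in> carrier_vec m" using mat_inv_C v unfolding w_def by auto
  have Cw: "C *\<^sub>v w = v"
    unfolding w_def using assoc_mult_mat_vec[OF block_carriers(3) mat_inv_C(3) v] mat_inv_C v by simp
  have Aw: "(A * mat_inv C) *\<^sub>v v = A *\<^sub>v w"
    unfolding w_def using assoc_mult_mat_vec[OF block_carriers(1) mat_inv_C(3) v] by simp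
  show "euc_norm ((A * mat_inv C) *\<^sub>v v) \<le> R * euc_norm v"
  proof (cases "w = 0\<^sub>v m")
    case True
    then show ?thesis
      using Aw mult_mat_zero_vec[OF block_carriers(1)] euc_norm_nonneg R_nonneg by simp
  next
    case False
    then have "R * euc_norm (0\<^sub>v m) < euc_norm w"
      using euc_norm_eq_0_iff[OF w] euc_norm_nonneg[of w] by simp
    from escape_inequality[OF w zero_carrier_vec this] show ?thesis
      using Aw Cw w v block_carriers by simp
  qed
qed

lemma op_norm_inv_C_mult_D_le: "op_norm (mat_inv C * D) \<le> R"
proof (rule op_norm_le[OF _ R_nonneg])
  fix v :: "complex vec" assume "v \<in> carrier_vec (dim_col (mat_inv C * D))"
  then have v: "v \<in> carrier_vec m" using block_carriers by auto
  show "euc_norm ((mat_inv C * D) *\<^sub>v v) \<le> R * euc_norm v"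
  proof (rule ccontr)
    define w where "w = - ((mat_inv C * D) *\<^sub>v v)"
    assume "\<not> ?thesis"
    then have "R * euc_norm v < euc_norm w" unfolding w_def by simp
    moreover have w: "w \<in> carrier_vec m" using mat_inv_C block_carriers v unfolding w_def by auto
    moreover have "C *\<^sub>v w + D *\<^sub>v v = 0\<^sub>v m"
    proof -
      have "C *\<^sub>v ((mat_inv C * D) *\<^sub>v v) = (C * (mat_inv C * D)) *\<^sub>v v"
        using block_carriers mat_inv_C v by (metis assoc_mult_mat_vec mult_carrier_mat)
      also have "C * (mat_inv C * D) = (C * mat_inv C) * D"
        using block_carriers mat_inv_C by (metis assoc_mult_mat)
      also have "\<dots> = D" using block_carriers mat_inv_C by simp
      finally have "C *\<^sub>v ((mat_inv C * D) *\<^sub>v v) = D *\<^sub>v v" .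
      then show ?thesis
        unfolding w_def using block_carriers mat_inv_C v by (simp add: mult_mat_vec_uminus)
    qed
    ultimately show False using lower_block_nonzero[OF w v] by simp
  qed
qed

end

theorem lemma7p3:
  fixes n :: nat and \<Gamma> :: "complex mat set set" and R :: real
  assumes "type_L n \<Gamma>"
    and "R > 0"
    and "V_R n R \<subseteq> Omega n \<Gamma>"
    and "\<forall>g\<in>\<Gamma> - {pgl_one (2*n+2)}. pgl_image g (V_R n R) \<inter> V_R n R = {}"
  shows "\<exists>R0>0. \<forall>g\<in>\<Gamma> - {pgl_one (2*n+2)}. \<forall>M\<in>g. det M = 1 \<longrightarrow>
           (case split_block M (n+1) (n+1) of (A, B, C, D) \<Rightarrow>
              det C \<noteq> 0 \<and> op_norm (A * mat_inv C) \<le> R0 \<and> op_norm (mat_inv C * D) \<le> R0)"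
proof (intro exI[of _ R] conjI ballI impI)
  fix g M assume g: "g \<in> \<Gamma> - {pgl_one (2*n+2)}" and Mg: "M \<in> g" and "det M = 1"
  have "g \<in> PGL (2*n+2)" using assms(1) g unfolding type_L_def is_subgroup_PGL_def by auto
  then have "M \<in> carrier_mat (2*n+2) (2*n+2)" using Mg unfolding PGL_def pgl_cls_def by auto
  moreover have "M *\<^sub>v z \<notin> V_R n R" if "z \<in> V_R n R" for z
    using assms(4) g Mg that unfolding pgl_image_def by blast
  moreover obtain A B C D where "split_block M (n+1) (n+1) = (A, B, C, D)"
    by (metis prod_cases4)
  ultimately interpret V_R_escaping_matrix n R M A B C D
    using \<open>det M = 1\<close> \<open>R > 0\<close> by unfold_locales auto
  show "case split_block M (n+1) (n+1) of (A, B, C, D) \<Rightarrow>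
          det C \<noteq> 0 \<and> op_norm (A * mat_inv C) \<le> R \<and> op_norm (mat_inv C * D) \<le> R"
    using blocks det_C_nonzero op_norm_A_mult_inv_C_le op_norm_inv_C_mult_D_le by simp
qed (use assms(2) in simp)

end
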